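(* Consider the asynchronous network Newton method described in the context with stepsize $\varepsilon>0$, and let $t\ge2$. Then for every realization and every $y\in\mathbb{R}^n$, $$\big\|D(t-1)^{1/2}y\big\|\le\Big(1+C_1\|g(t-2)\|^{1/2}\Big)\big\|D(t-2)^{1/2}y\big\|,\qquad C_1=\left(\frac{\varepsilon\alpha L\Lambda}{2(1-\Delta)+\alpha m}\right)^{1/2}.$$
   Context: Setup. Let $n\ge 1$ be the number of agents and $\alpha>0$ a scalar. $W\in\mathbb{R}^{n\times n}$ is a symmetric nonnegative matrix with $W\mathbb{1}=\mathbb{1}$ (where $\mathbb{1}$ is the all-ones vector), $\mathrm{null}(I-W)=\mathrm{span}\{\mathbb{1}\}$, $0\le W_{ij}<1$ for all $i,j$, and $\delta\le W_{ii}\le\Delta$ for all $i$, for constants $0<\delta\le\Delta<1$. Each $f_i:\mathbb{R}\to\mathbb{R}$ is twice continuously differentiable with $0<m\le f_i''(s)\le M<\infty$ for all $s$ and $|f_i''(a)-f_i''(b)|\le L|a-b|$ for all $a,b$. Define $F(x)=\frac12 x^T(I-W)x+\alpha\sum_{i=1}^n f_i(x_i)$ for $x\in\mathbb{R}^n$, with minimum value $F^*$ and minimizer $x^*$. Let $g(x)=\nabla F(x)$, $G(x)=\mathrm{diag}(f_1''(x_1),\dots,f_n''(x_n))$, $H(x)=\nabla^2F(x)=I-W+\alpha G(x)$. Let $W_d$ be the diagonal matrix with $[W_d]_{ii}=W_{ii}$, and set $D(x)=\alpha G(x)+2(I-W_d)$ (diagonal, positive definite) and $B=I-2W_d+W$,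 so $H(x)=D(x)-B$. Define the approximate Hessian inverse $\hat H(x)^{-1}=D(x)^{-1/2}\big(I+D(x)^{-1/2}BD(x)^{-1/2}\big)D(x)^{-1/2}$. Constants: $\rho=\frac{2(1-\delta)}{2(1-\delta)+\alpha m}$, $\Lambda=\frac{1+\rho}{2(1-\Delta)+\alpha m}$, $\lambda=\frac{1}{2(1-\delta)+\alpha M}$. Algorithm (asynchronous network Newton). Given $x(0)\in\mathbb{R}^n$ and stepsize $\varepsilon>0$, let $\Phi(1),\Phi(2),\dots$ be i.i.d. random diagonal $n\times n$ matrices, each equal to $e_ie_i^T$ (the matrix with a single $1$ in position $(i,i)$ and zeros elsewhere) with probability $1/n$ for each $i=1,\dots,n$ (i.e., one uniformly random agent is active per iteration). The iterates are $x(t)=x(t-1)-\varepsilon\,\Phi(t)\hat H(x(t-1))^{-1}g(x(t-1))$, $t\ge1$. Write $g(t)=g(x(t))$, $D(t)=D(x(t))$, $H(t)=H(x(t))$, $\hat H(t)^{-1}=\hat H(x(t))^{-1}$. $\mathcal{F}_t$ denotes the $\sigma$-field generated by $\Phi(1),\dots,\Phi(t)$ (so $x(t)$ is $\mathcal{F}_t$-measurable). *)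

theory Defs
  imports "HOL-Analysis.Analysis"
begin

definition diag_mat :: "real ^ 'n \<Rightarrow> real ^ 'n ^ 'n" where
  "diag_mat v = (\<chi> i j. if i = j then v $ i else 0)"

(* g(x) = grad F(x) = (I - W) x + alpha (f_i'(x_i))_i ; f1 i is f_i' *)
definition gradF :: "real ^ 'n ^ 'n \<Rightarrow> real \<Rightarrow> ('n \<Rightarrow> real \<Rightarrow> real) \<Rightarrow> real ^ 'n \<Rightarrow> real ^ 'n" where
  "gradF W alpha f1 x = (mat 1 - W) *v x + alpha *\<^sub>R (\<chi> i. f1 i (x $ i))"

(* diagonal of D(x) = alpha G(x) + 2 (I - W_d); f2 i is f_i'' *)
definition Dvec :: "real ^ 'n ^ 'n \<Rightarrow> real \<Rightarrow> ('n \<Rightarrow> real \<Rightarrow> real) \<Rightarrow> real ^ 'n \<Rightarrow> real ^ 'n" where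
  "Dvec W alpha f2 x = (\<chi> i. alpha * f2 i (x $ i) + 2 * (1 - W $ i $ i))"

definition Dmat :: "real ^ 'n ^ 'n \<Rightarrow> real \<Rightarrow> ('n \<Rightarrow> real \<Rightarrow> real) \<Rightarrow> real ^ 'n \<Rightarrow> real ^ 'n ^ 'n" where
  "Dmat W alpha f2 x = diag_mat (Dvec W alpha f2 x)"

definition Dsqrt :: "real ^ 'n ^ 'n \<Rightarrow> real \<Rightarrow> ('n \<Rightarrow> real \<Rightarrow> real) \<Rightarrow> real ^ 'n \<Rightarrow> real ^ 'n ^ 'n" where
  "Dsqrt W alpha f2 x = diag_mat (\<chi> i. sqrt (Dvec W alpha f2 x $ i))"

definition Dsqrt_inv :: "real ^ 'n ^ 'n \<Rightarrow> real \<Rightarrow> ('n \<Rightarrow> real \<Rightarrow> real) \<Rightarrow> real ^ 'n \<Rightarrow> real ^ 'n ^ 'n" where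
  "Dsqrt_inv W alpha f2 x = diag_mat (\<chi> i. 1 / sqrt (Dvec W alpha f2 x $ i))"

definition Wdiag :: "real ^ 'n ^ 'n \<Rightarrow> real ^ 'n ^ 'n" where
  "Wdiag W = diag_mat (\<chi> i. W $ i $ i)"

definition Bmat :: "real ^ 'n ^ 'n \<Rightarrow> real ^ 'n ^ 'n" where
  "Bmat W = mat 1 - 2 *\<^sub>R Wdiag W + W"

definition Hhat_inv :: "real ^ 'n ^ 'n \<Rightarrow> real \<Rightarrow> ('n \<Rightarrow> real \<Rightarrow> real) \<Rightarrow> real ^ 'n \<Rightarrow> real ^ 'n ^ 'n" where
  "Hhat_inv W alpha f2 x =
     Dsqrt_inv W alpha f2 x **
     (mat 1 + Dsqrt_inv W alpha f2 x ** Bmat W ** Dsqrt_inv W alpha f2 x) **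
     Dsqrt_inv W alpha f2 x"

definition Phi :: "'n \<Rightarrow> real ^ 'n ^ 'n" where
  "Phi i = diag_mat (\<chi> j. if j = i then 1 else 0)"

(* iterates of the asynchronous network Newton method along a realization:
   sel t is the agent active at iteration t (t >= 1), i.e. Phi(t) = e_{sel t} e_{sel t}^T *)
primrec ann_iter :: "real ^ 'n ^ 'n \<Rightarrow> real \<Rightarrow> ('n \<Rightarrow> real \<Rightarrow> real) \<Rightarrow> ('n \<Rightarrow> real \<Rightarrow> real)
    \<Rightarrow> real \<Rightarrow> real ^ 'n \<Rightarrow> (nat \<Rightarrow> 'n) \<Rightarrow> nat \<Rightarrow> real ^ 'n" where
  "ann_iter W alpha f1 f2 eps x0 sel 0 = x0"
| "ann_iter W alpha f1 f2 eps x0 sel (Suc t) =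
     ann_iter W alpha f1 f2 eps x0 sel t
     - eps *\<^sub>R (Phi (sel (Suc t)) *v
         (Hhat_inv W alpha f2 (ann_iter W alpha f1 f2 eps x0 sel t) *v
           gradF W alpha f1 (ann_iter W alpha f1 f2 eps x0 sel t)))"

end

theory Submission
  imports Defs
begin

(*
  Only agent k = sel t moves at step t, and by at most eps |(Hhat(x)^-1 g)_k|.
  Since B is nonnegative with row sums 2 (1 - W_kk) and every diagonal entry of D is at least
  2 (1 - Delta) + alpha m, each entry of Hhat(x)^-1 g is bounded by Lambda |g|. By the Lipschitz
  bound on f_k'' the diagonal of D then grows by a factor at most 1 + C1^2 |g| <= (1 + C1 |g|^(1/2))^2,
  which bounds the weighted norm |D^(1/2) y|.
*)

lemma diag_mat_mult_vec: "diag_mat v *v y = (\<chi> i. v $ i * (y $ i :: real))"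
proof -
  have "(\<Sum>j\<in>UNIV. (if i = j then v $ i else 0) * y $ j) = v $ i * y $ i" for i
  proof -
    have "(\<Sum>j\<in>UNIV. (if i = j then v $ i else 0) * y $ j) = (\<Sum>j\<in>UNIV. if i = j then v $ j * y $ j else 0)"
      by (rule sum.cong) auto
    then show ?thesis by simp
  qed
  then show ?thesis by (simp add: vec_eq_iff diag_mat_def matrix_vector_mult_def)
qed

lemma Phi_mult_vec_nth: "(Phi k *v v) $ i = (if i = k then v $ i else (0::real))"
  by (simp add: Phi_def diag_mat_mult_vec)

lemma norm_diag_sqrt_mult_vec_squared:
  assumes "\<And>i. 0 \<le> d $ i"
  shows "(norm (diag_mat (\<chi> i. sqrt (d $ i)) *v y))\<^sup>2 = (\<Sum>i\<in>UNIV. d $ i * (y $ i)\<^sup>2)"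
  unfolding power2_norm_eq_inner diag_mat_mult_vec inner_vec_def
  using assms by (simp add: power2_eq_square[symmetric] power_mult_distrib)

lemma norm_diag_sqrt_mult_vec_mono:
  assumes d_nonneg: "\<And>i. 0 \<le> d $ i" and d'_nonneg: "\<And>i. 0 \<le> d' $ i"
    and d'_le: "\<And>i. d' $ i \<le> K\<^sup>2 * d $ i" and K_nonneg: "0 \<le> K"
  shows "norm (diag_mat (\<chi> i. sqrt (d' $ i)) *v y) \<le> K * norm (diag_mat (\<chi> i. sqrt (d $ i)) *v y)"
proof (rule power2_le_imp_le)
  have "(norm (diag_mat (\<chi> i. sqrt (d' $ i)) *v y))\<^sup>2 = (\<Sum>i\<in>UNIV. d' $ i * (y $ i)\<^sup>2)"
    using d'_nonneg by (rule norm_diag_sqrt_mult_vec_squared)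
  also have "\<dots> \<le> (\<Sum>i\<in>UNIV. K\<^sup>2 * (d $ i * (y $ i)\<^sup>2))"
    using d'_le by (intro sum_mono) (simp add: mult.assoc[symmetric] mult_right_mono)
  also have "\<dots> = (K * norm (diag_mat (\<chi> i. sqrt (d $ i)) *v y))\<^sup>2"
    using d_nonneg by (simp add: norm_diag_sqrt_mult_vec_squared power_mult_distrib sum_distrib_left)
  finally show "(norm (diag_mat (\<chi> i. sqrt (d' $ i)) *v y))\<^sup>2 \<le> (K * norm (diag_mat (\<chi> i. sqrt (d $ i)) *v y))\<^sup>2" .
  show "0 \<le> K * norm (diag_mat (\<chi> i. sqrt (d $ i)) *v y)" using K_nonneg by simp
qed

lemma Lipschitz_const_nonneg:
  fixes f :: "real \<Rightarrow> real"
  assumes "\<forall>a b. \<bar>f a - f b\<bar> \<le> L * \<bar>a - b\<bar>"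
  shows "0 \<le> L"
  using assms[rule_format, of 1 0] by simp

lemma Bmat_nth: "Bmat W $ k $ j = (if k = j then 1 - W $ k $ k else (W $ k $ j :: real))"
  by (simp add: Bmat_def Wdiag_def diag_mat_def mat_def)

lemma Bmat_nonneg:
  assumes "\<forall>i j. 0 \<le> W $ i $ j" and "\<forall>i j. W $ i $ j < 1"
  shows "0 \<le> Bmat W $ k $ (j :: 'n :: finite)"
  using assms by (simp add: Bmat_nth less_imp_le)

lemma Bmat_row_sum:
  fixes W :: "real ^ 'n ^ 'n"
  assumes "W *v vec 1 = vec 1"
  shows "(\<Sum>j\<in>UNIV. Bmat W $ k $ j) = 2 * (1 - W $ k $ k)"
proof -
  have W_row: "(\<Sum>j\<in>UNIV. W $ k $ j) = 1"
    using arg_cong[OF assms, of "\<lambda>v. v $ k"] by (simp add: matrix_vector_mult_def)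
  have "(\<Sum>j\<in>UNIV. Bmat W $ k $ j) = (\<Sum>j\<in>UNIV. W $ k $ j + (if k = j then 1 - 2 * W $ k $ k else 0))"
    by (rule sum.cong) (auto simp: Bmat_nth)
  also have "\<dots> = 1 + (1 - 2 * W $ k $ k)" by (simp add: sum.distrib W_row)
  finally show ?thesis by simp
qed

lemma Dvec_lower_bound:
  assumes "0 \<le> alpha" and "\<forall>i s. m \<le> f2 i s"
  shows "2 * (1 - W $ k $ k) + alpha * m \<le> Dvec W alpha f2 x $ k"
  using assms by (simp add: Dvec_def mult_left_mono)

lemma Dvec_uniform_lower_bound:
  assumes "0 \<le> alpha" and "\<forall>i s. m \<le> f2 i s" and "\<forall>i. W $ i $ i \<le> \<Delta>"
  shows "2 * (1 - \<Delta>) + alpha * m \<le> Dvec W alpha f2 x $ k"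
proof -
  have "W $ k $ k \<le> \<Delta>" using assms(3) by blast
  moreover have "alpha * m \<le> alpha * f2 k (x $ k)" using assms(1,2) by (simp add: mult_left_mono)
  ultimately show ?thesis by (simp add: Dvec_def)
qed

lemma Dvec_diff_le:
  assumes "0 \<le> alpha" and "\<forall>i a b. \<bar>f2 i a - f2 i b\<bar> \<le> L * \<bar>a - b\<bar>"
  shows "Dvec W alpha f2 x' $ k - Dvec W alpha f2 x $ k \<le> alpha * L * \<bar>x' $ k - x $ k\<bar>"
proof -
  have "Dvec W alpha f2 x' $ k - Dvec W alpha f2 x $ k = alpha * (f2 k (x' $ k) - f2 k (x $ k))"
    by (simp add: Dvec_def algebra_simps)
  also have "\<dots> \<le> alpha * (L * \<bar>x' $ k - x $ k\<bar>)"
    using assms by (intro mult_left_mono) (auto simp: abs_le_iff)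
  finally show ?thesis by simp
qed

lemma Hhat_inv_mult_vec_nth:
  fixes W :: "real ^ 'n ^ 'n" and alpha :: real and f2 :: "'n \<Rightarrow> real \<Rightarrow> real" and x :: "real ^ 'n"
  defines "D \<equiv> \<lambda>j. Dvec W alpha f2 x $ j"
  assumes D_pos: "\<And>j. 0 < D j"
  shows "(Hhat_inv W alpha f2 x *v g) $ k
           = (g $ k + (\<Sum>j\<in>UNIV. Bmat W $ k $ j * (g $ j / D j))) / D k"
proof -
  let ?S = "Dsqrt_inv W alpha f2 x"
  have Hhat_eq: "Hhat_inv W alpha f2 x *v g = ?S *v (?S *v g + ?S *v (Bmat W *v (?S *v (?S *v g))))"
    unfolding Hhat_inv_def
    by (simp add: matrix_vector_mul_assoc[symmetric] matrix_vector_mult_add_rdistrib)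
  have S_twice: "1 / sqrt (D j) * (1 / sqrt (D j) * z) = z / D j" for j z
    using D_pos[of j] by (simp add: less_imp_le)
  have "?S *v (?S *v g) = (\<chi> j. g $ j / D j)"
    unfolding Dsqrt_inv_def diag_mat_mult_vec D_def[symmetric] using S_twice by (simp add: vec_eq_iff)
  then have "(Hhat_inv W alpha f2 x *v g) $ k
      = 1 / sqrt (D k) * (1 / sqrt (D k) * g $ k) + 1 / sqrt (D k) * (1 / sqrt (D k) * (Bmat W *v (\<chi> j. g $ j / D j)) $ k)"
    unfolding Hhat_eq Dsqrt_inv_def diag_mat_mult_vec D_def[symmetric] by (simp add: distrib_left)
  then show ?thesis
    unfolding S_twice by (simp add: matrix_vector_mult_def add_divide_distrib)
qed

lemma abs_weighted_sum_div_le: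
  fixes B D g :: "'n :: finite \<Rightarrow> real"
  assumes c_pos: "0 < c" and D_ge: "\<And>j. c \<le> D j" and B_nonneg: "\<And>j. 0 \<le> B j"
    and g_le: "\<And>j. \<bar>g j\<bar> \<le> G"
  shows "\<bar>\<Sum>j\<in>UNIV. B j * (g j / D j)\<bar> \<le> (\<Sum>j\<in>UNIV. B j) * (G / c)"
proof -
  have "\<bar>B j * (g j / D j)\<bar> \<le> B j * (G / c)" for j
  proof -
    have D_pos: "0 < D j" using c_pos D_ge[of j] by linarith
    have "\<bar>g j\<bar> / D j \<le> G / D j"
      using g_le[of j] D_pos by (simp add: divide_right_mono)
    also have "\<dots> \<le> G / c"
      using g_le[of j] D_ge[of j] c_pos by (intro divide_left_mono) auto
    finally have "\<bar>g j / D j\<bar> \<le> G / c" using D_pos by simp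
    then show ?thesis
      unfolding abs_mult abs_of_nonneg[OF B_nonneg[of j]] using B_nonneg[of j] by (rule mult_left_mono)
  qed
  then have "\<bar>\<Sum>j\<in>UNIV. B j * (g j / D j)\<bar> \<le> (\<Sum>j\<in>UNIV. B j * (G / c))"
    by (rule order_trans[OF sum_abs sum_mono])
  then show ?thesis by (simp only: sum_distrib_right)
qed

text \<open>The bound is monotone in w, so it is taken at the worst case w' = 1 - \<delta>.\<close>

lemma Hhat_entry_scalar_bound:
  fixes a c d w w' G :: real
  assumes c_pos: "0 < c" and a_pos: "0 < a" and w: "0 \<le> w" "w \<le> w'"
    and c_le: "c \<le> 2 * w + a" and d_ge: "2 * w + a \<le> d" and G_nonneg: "0 \<le> G"
  shows "(G + 2 * w * (G / c)) / d \<le> (1 + 2 * w' / (2 * w' + a)) / c * G"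
proof -
  have num_nonneg: "0 \<le> G + 2 * w * (G / c)" using G_nonneg c_pos w by simp
  have "(G + 2 * w * (G / c)) / d \<le> (G + 2 * w * (G / c)) / (2 * w + a)"
    using num_nonneg d_ge a_pos w by (intro divide_left_mono) auto
  also have "\<dots> = G / c * (c / (2 * w + a) + 2 * w / (2 * w + a))"
    using c_pos by (simp add: field_simps add_divide_distrib[symmetric])
  also have "\<dots> \<le> G / c * (1 + 2 * w' / (2 * w' + a))"
  proof (rule mult_left_mono)
    have "c / (2 * w + a) \<le> 1" using c_le c_pos by simp
    moreover have "2 * w / (2 * w + a) \<le> 2 * w' / (2 * w' + a)"
    proof -
      have "w * (2 * w' + a) \<le> w' * (2 * w + a)"
        using mult_right_mono[OF w(2), of a] a_pos by (simp add: algebra_simps)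
      then show ?thesis using a_pos w by (simp add: divide_simps)
    qed
    ultimately show "c / (2 * w + a) + 2 * w / (2 * w + a) \<le> 1 + 2 * w' / (2 * w' + a)" by linarith
  qed (use G_nonneg c_pos in simp)
  finally show ?thesis by (simp add: mult.commute)
qed

definition ann_Lambda :: "real \<Rightarrow> real \<Rightarrow> real \<Rightarrow> real \<Rightarrow> real" where
  "ann_Lambda alpha m \<delta> \<Delta> = (1 + 2 * (1 - \<delta>) / (2 * (1 - \<delta>) + alpha * m)) / (2 * (1 - \<Delta>) + alpha * m)"

definition ann_C1 :: "real \<Rightarrow> real \<Rightarrow> real \<Rightarrow> real \<Rightarrow> real \<Rightarrow> real \<Rightarrow> real" where
  "ann_C1 eps alpha L m \<delta> \<Delta> = sqrt (eps * alpha * L * ann_Lambda alpha m \<delta> \<Delta> / (2 * (1 - \<Delta>) + alpha * m))"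

lemma ann_Lambda_nonneg:
  assumes "0 < alpha" "0 < m" "\<delta> \<le> 1" "\<Delta> < 1"
  shows "0 \<le> ann_Lambda alpha m \<delta> \<Delta>"
  using assms by (simp add: ann_Lambda_def)

lemma ann_C1_nonneg_and_squared:
  assumes "0 < alpha" "0 < m" "\<delta> \<le> 1" "\<Delta> < 1" "0 \<le> eps" "0 \<le> L"
  shows "0 \<le> ann_C1 eps alpha L m \<delta> \<Delta>"
    and "(ann_C1 eps alpha L m \<delta> \<Delta>)\<^sup>2 = eps * alpha * L * ann_Lambda alpha m \<delta> \<Delta> / (2 * (1 - \<Delta>) + alpha * m)"
proof -
  have "0 \<le> eps * alpha * L * ann_Lambda alpha m \<delta> \<Delta> / (2 * (1 - \<Delta>) + alpha * m)"
    using assms ann_Lambda_nonneg[OF assms(1-4)] by simp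
  then show "0 \<le> ann_C1 eps alpha L m \<delta> \<Delta>"
    and "(ann_C1 eps alpha L m \<delta> \<Delta>)\<^sup>2 = eps * alpha * L * ann_Lambda alpha m \<delta> \<Delta> / (2 * (1 - \<Delta>) + alpha * m)"
    by (simp_all add: ann_C1_def)
qed

lemma abs_Hhat_inv_mult_vec_nth_le:
  fixes W :: "real ^ 'n ^ 'n" and f2 :: "'n \<Rightarrow> real \<Rightarrow> real"
  assumes alpha_pos: "0 < alpha" and m_pos: "0 < m" and f2_ge: "\<forall>i s. m \<le> f2 i s"
    and W_nonneg: "\<forall>i j. 0 \<le> W $ i $ j" and W_lt1: "\<forall>i j. W $ i $ j < 1"
    and W_stoch: "W *v vec 1 = vec 1"
    and W_diag: "\<forall>i. \<delta> \<le> W $ i $ i \<and> W $ i $ i \<le> \<Delta>" and Delta_lt1: "\<Delta> < 1"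
  shows "\<bar>(Hhat_inv W alpha f2 x *v g) $ k\<bar> \<le> ann_Lambda alpha m \<delta> \<Delta> * norm g"
proof -
  define c where "c = 2 * (1 - \<Delta>) + alpha * m"
  define D where "D = (\<lambda>j. Dvec W alpha f2 x $ j)"
  define S where "S = (\<Sum>j\<in>UNIV. Bmat W $ k $ j * (g $ j / D j))"
  have am_pos: "0 < alpha * m" using alpha_pos m_pos by simp
  have c_pos: "0 < c" using Delta_lt1 am_pos by (simp add: c_def)
  have D_ge: "c \<le> D j" for j
    unfolding c_def D_def using alpha_pos f2_ge W_diag by (intro Dvec_uniform_lower_bound) auto
  have D_pos: "0 < D j" for j using D_ge[of j] c_pos by linarith
  have g_le: "\<bar>g $ j\<bar> \<le> norm g" for j by (rule component_le_norm_cart)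
  have "\<bar>S\<bar> \<le> (\<Sum>j\<in>UNIV. Bmat W $ k $ j) * (norm g / c)"
    unfolding S_def using c_pos D_ge Bmat_nonneg[OF W_nonneg W_lt1] g_le
    by (rule abs_weighted_sum_div_le)
  then have S_le: "\<bar>S\<bar> \<le> 2 * (1 - W $ k $ k) * (norm g / c)"
    by (simp only: Bmat_row_sum[OF W_stoch])
  have "(Hhat_inv W alpha f2 x *v g) $ k = (g $ k + S) / D k"
    unfolding S_def D_def using D_pos[unfolded D_def] by (rule Hhat_inv_mult_vec_nth)
  then have "\<bar>(Hhat_inv W alpha f2 x *v g) $ k\<bar> = \<bar>g $ k + S\<bar> / D k"
    using D_pos[of k] by (simp add: abs_divide)
  also have "\<dots> \<le> (norm g + 2 * (1 - W $ k $ k) * (norm g / c)) / D k"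
    using abs_triangle_ineq[of "g $ k" S] g_le[of k] S_le D_pos[of k]
    by (intro divide_right_mono) auto
  also have "\<dots> \<le> (1 + 2 * (1 - \<delta>) / (2 * (1 - \<delta>) + alpha * m)) / c * norm g"
  proof (rule Hhat_entry_scalar_bound)
    have "\<delta> \<le> W $ k $ k" "W $ k $ k \<le> \<Delta>" using W_diag by blast+
    then show "0 \<le> 1 - W $ k $ k" "1 - W $ k $ k \<le> 1 - \<delta>" "c \<le> 2 * (1 - W $ k $ k) + alpha * m"
      using Delta_lt1 by (auto simp: c_def)
    show "2 * (1 - W $ k $ k) + alpha * m \<le> D k"
      unfolding D_def using alpha_pos f2_ge by (intro Dvec_lower_bound) auto
  qed (use c_pos am_pos in simp_all)
  finally show ?thesis by (simp add: c_def ann_Lambda_def)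
qed

lemma ann_iter_Suc_nth_diff:
  assumes "0 \<le> eps"
  shows "\<bar>ann_iter W alpha f1 f2 eps x0 sel (Suc s) $ i - ann_iter W alpha f1 f2 eps x0 sel s $ i\<bar>
         \<le> eps * \<bar>(Hhat_inv W alpha f2 (ann_iter W alpha f1 f2 eps x0 sel s)
                     *v gradF W alpha f1 (ann_iter W alpha f1 f2 eps x0 sel s)) $ i\<bar>"
  using assms by (simp add: Phi_mult_vec_nth abs_mult)

lemma growth_le_one_plus_sqrt_squared:
  fixes C G c d d' :: real
  assumes "0 \<le> C" "0 \<le> G" "0 \<le> c" "c \<le> d" and "d' - d \<le> c * (C\<^sup>2 * G)"
  shows "d' \<le> (1 + C * sqrt G)\<^sup>2 * d"
proof -
  have "d' \<le> d * (1 + C\<^sup>2 * G)"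
    using assms mult_right_mono[of c d "C\<^sup>2 * G"] by (simp add: algebra_simps)
  also have "\<dots> \<le> d * (1 + C * sqrt G)\<^sup>2"
    using assms by (intro mult_left_mono) (auto simp: power2_sum power_mult_distrib)
  finally show ?thesis by (simp add: mult.commute)
qed

lemma Dvec_ann_iter_Suc_le:
  fixes W :: "real ^ 'n ^ 'n" and f2 :: "'n \<Rightarrow> real \<Rightarrow> real"
  assumes alpha_pos: "0 < alpha" and m_pos: "0 < m" and f2_ge: "\<forall>i s. m \<le> f2 i s"
    and f2_lip: "\<forall>i a b. \<bar>f2 i a - f2 i b\<bar> \<le> L * \<bar>a - b\<bar>"
    and W_nonneg: "\<forall>i j. 0 \<le> W $ i $ j" and W_lt1: "\<forall>i j. W $ i $ j < 1"
    and W_stoch: "W *v vec 1 = vec 1" and delta_le: "\<delta> \<le> \<Delta>"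
    and W_diag: "\<forall>i. \<delta> \<le> W $ i $ i \<and> W $ i $ i \<le> \<Delta>" and Delta_lt1: "\<Delta> < 1"
    and eps_nonneg: "0 \<le> eps"
  shows "Dvec W alpha f2 (ann_iter W alpha f1 f2 eps x0 sel (Suc s)) $ i
           \<le> (1 + ann_C1 eps alpha L m \<delta> \<Delta> * sqrt (norm (gradF W alpha f1 (ann_iter W alpha f1 f2 eps x0 sel s))))\<^sup>2
             * Dvec W alpha f2 (ann_iter W alpha f1 f2 eps x0 sel s) $ i"
proof -
  define x where "x = ann_iter W alpha f1 f2 eps x0 sel"
  define c where "c = 2 * (1 - \<Delta>) + alpha * m"
  define G where "G = norm (gradF W alpha f1 (x s))"
  have c_pos: "0 < c" using Delta_lt1 mult_pos_pos[OF alpha_pos m_pos] by (simp add: c_def)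
  have L_nonneg: "0 \<le> L" using Lipschitz_const_nonneg[of "f2 undefined" L] f2_lip by auto
  note C1 = ann_C1_nonneg_and_squared[OF alpha_pos m_pos _ Delta_lt1 eps_nonneg L_nonneg]
  have "\<bar>x (Suc s) $ i - x s $ i\<bar> \<le> eps * \<bar>(Hhat_inv W alpha f2 (x s) *v gradF W alpha f1 (x s)) $ i\<bar>"
    unfolding x_def using eps_nonneg by (rule ann_iter_Suc_nth_diff)
  also have "\<dots> \<le> eps * (ann_Lambda alpha m \<delta> \<Delta> * G)"
    using abs_Hhat_inv_mult_vec_nth_le[OF alpha_pos m_pos f2_ge W_nonneg W_lt1 W_stoch W_diag Delta_lt1] eps_nonneg
    by (intro mult_left_mono) (simp_all add: G_def)
  finally have step_le: "\<bar>x (Suc s) $ i - x s $ i\<bar> \<le> eps * (ann_Lambda alpha m \<delta> \<Delta> * G)" .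
  have "Dvec W alpha f2 (x (Suc s)) $ i - Dvec W alpha f2 (x s) $ i \<le> alpha * L * \<bar>x (Suc s) $ i - x s $ i\<bar>"
    using alpha_pos f2_lip by (intro Dvec_diff_le) simp_all
  also have "\<dots> \<le> alpha * L * (eps * (ann_Lambda alpha m \<delta> \<Delta> * G))"
    using step_le alpha_pos L_nonneg by (intro mult_left_mono) simp_all
  also have "\<dots> = c * ((ann_C1 eps alpha L m \<delta> \<Delta>)\<^sup>2 * G)"
    using C1(2) delta_le Delta_lt1 c_pos by (simp add: c_def)
  finally have D_diff: "Dvec W alpha f2 (x (Suc s)) $ i - Dvec W alpha f2 (x s) $ i
      \<le> c * ((ann_C1 eps alpha L m \<delta> \<Delta>)\<^sup>2 * G)" .
  have c_le: "c \<le> Dvec W alpha f2 (x s) $ i"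
    unfolding c_def using alpha_pos f2_ge W_diag by (intro Dvec_uniform_lower_bound) auto
  have "0 \<le> ann_C1 eps alpha L m \<delta> \<Delta>" using C1(1) delta_le Delta_lt1 by simp
  from growth_le_one_plus_sqrt_squared[OF this _ less_imp_le[OF c_pos] c_le D_diff]
  show ?thesis by (simp add: x_def G_def)
qed

lemma norm_Dsqrt_ann_iter_Suc_le:
  fixes W :: "real ^ 'n ^ 'n" and f2 :: "'n \<Rightarrow> real \<Rightarrow> real"
  assumes alpha_pos: "0 < alpha" and m_pos: "0 < m" and f2_ge: "\<forall>i s. m \<le> f2 i s"
    and f2_lip: "\<forall>i a b. \<bar>f2 i a - f2 i b\<bar> \<le> L * \<bar>a - b\<bar>"
    and W_nonneg: "\<forall>i j. 0 \<le> W $ i $ j" and W_lt1: "\<forall>i j. W $ i $ j < 1"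
    and W_stoch: "W *v vec 1 = vec 1" and delta_le: "\<delta> \<le> \<Delta>"
    and W_diag: "\<forall>i. \<delta> \<le> W $ i $ i \<and> W $ i $ i \<le> \<Delta>" and Delta_lt1: "\<Delta> < 1"
    and eps_nonneg: "0 \<le> eps"
  shows "norm (Dsqrt W alpha f2 (ann_iter W alpha f1 f2 eps x0 sel (Suc s)) *v y)
           \<le> (1 + ann_C1 eps alpha L m \<delta> \<Delta> * sqrt (norm (gradF W alpha f1 (ann_iter W alpha f1 f2 eps x0 sel s))))
             * norm (Dsqrt W alpha f2 (ann_iter W alpha f1 f2 eps x0 sel s) *v y)"
proof -
  have "0 \<le> 2 * (1 - \<Delta>) + alpha * m" using alpha_pos m_pos Delta_lt1 by simp
  then have D_nonneg: "0 \<le> Dvec W alpha f2 z $ i" for z i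
    using Dvec_uniform_lower_bound[of alpha m f2 W \<Delta> z i] alpha_pos f2_ge W_diag by force
  have "0 \<le> ann_C1 eps alpha L m \<delta> \<Delta>"
    using delta_le Delta_lt1 Lipschitz_const_nonneg[of "f2 undefined" L] f2_lip
    by (intro ann_C1_nonneg_and_squared(1) alpha_pos m_pos eps_nonneg) auto
  then have K_nonneg:
    "0 \<le> 1 + ann_C1 eps alpha L m \<delta> \<Delta> * sqrt (norm (gradF W alpha f1 (ann_iter W alpha f1 f2 eps x0 sel s)))"
    by simp
  show ?thesis
    unfolding Dsqrt_def using D_nonneg D_nonneg Dvec_ann_iter_Suc_le[OF assms] K_nonneg
    by (rule norm_diag_sqrt_mult_vec_mono)
qed

theorem mainTheorem6:
  fixes W :: "real ^ 'n ^ 'n"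
    and alpha eps m M L \<delta> \<Delta> :: real
    and f f1 f2 :: "'n \<Rightarrow> real \<Rightarrow> real"
    and x0 :: "real ^ 'n"
    and sel :: "nat \<Rightarrow> 'n"
    and t :: nat
  assumes alpha_pos: "alpha > 0"
    and W_sym: "transpose W = W"
    and W_nonneg: "\<forall>i j. 0 \<le> W $ i $ j"
    and W_lt1: "\<forall>i j. W $ i $ j < 1"
    and W_stoch: "W *v vec 1 = vec 1"
    and W_null: "{v. (mat 1 - W) *v v = 0} = span {vec 1}"
    and delta_pos: "0 < \<delta>" and delta_le: "\<delta> \<le> \<Delta>" and Delta_lt1: "\<Delta> < 1"
    and W_diag: "\<forall>i. \<delta> \<le> W $ i $ i \<and> W $ i $ i \<le> \<Delta>"
    and f_deriv: "\<forall>i s. (f i has_real_derivative f1 i s) (at s)"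
    and f1_deriv: "\<forall>i s. (f1 i has_real_derivative f2 i s) (at s)"
    and f2_cont: "\<forall>i. continuous_on UNIV (f2 i)"
    and m_pos: "0 < m"
    and f2_bounds: "\<forall>i s. m \<le> f2 i s \<and> f2 i s \<le> M"
    and f2_lip: "\<forall>i a b. \<bar>f2 i a - f2 i b\<bar> \<le> L * \<bar>a - b\<bar>"
    and eps_pos: "eps > 0"
    and t_ge: "t \<ge> 2"
  shows "let \<rho> = 2 * (1 - \<delta>) / (2 * (1 - \<delta>) + alpha * m);
             \<Lambda> = (1 + \<rho>) / (2 * (1 - \<Delta>) + alpha * m);
             C1 = sqrt (eps * alpha * L * \<Lambda> / (2 * (1 - \<Delta>) + alpha * m));
             x = ann_iter W alpha f1 f2 eps x0 sel
         in \<forall>y :: real ^ 'n.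
              norm (Dsqrt W alpha f2 (x (t - 1)) *v y)
              \<le> (1 + C1 * sqrt (norm (gradF W alpha f1 (x (t - 2)))))
                 * norm (Dsqrt W alpha f2 (x (t - 2)) *v y)"
proof -
  have f2_ge: "\<forall>i s. m \<le> f2 i s" using f2_bounds by blast
  have "t - 1 = Suc (t - 2)" using t_ge by simp
  then have "norm (Dsqrt W alpha f2 (ann_iter W alpha f1 f2 eps x0 sel (t - 1)) *v y)
      \<le> (1 + ann_C1 eps alpha L m \<delta> \<Delta> * sqrt (norm (gradF W alpha f1 (ann_iter W alpha f1 f2 eps x0 sel (t - 2)))))
        * norm (Dsqrt W alpha f2 (ann_iter W alpha f1 f2 eps x0 sel (t - 2)) *v y)" for y
    using norm_Dsqrt_ann_iter_Suc_le[OF alpha_pos m_pos f2_ge f2_lip W_nonneg W_lt1 W_stoch delta_le W_diag Delta_lt1]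
      eps_pos by simp
  then show ?thesis by (simp add: Let_def ann_C1_def ann_Lambda_def)
qed

end
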